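(* Let $d_1,\dots,d_m$ be positive integers with $\sum_{j=1}^m d_j=n$ and let $B=\sum_{j=1}^m d_j\log_2(n/d_j)$. Fix $i$ and let $d_i'=d_i+1$, $d_j'=d_j$ for $j\ne i$, $n'=n+1$, and $B'=\sum_{j=1}^m d_j'\log_2(n'/d_j')$. Then there is an absolute constant $c>0$ (independent of $n,m,d_1,\dots,d_m,i$) such that $$(B'+n')-(B+n)\ \ge\ c\cdot\log(n/d_i).$$
   Context: $\log_2$ denotes the binary logarithm and $\log(x):=\max(\log_2 x,1)$. This models inserting one element into gap $\Delta_i$ of a partition of $n$ elements into gaps of sizes $d_j=|\Delta_j|$. *)

theory Defs
  imports Complex_Main
begin

text \<open>Truncated binary logarithm: log(x) = max(log_2 x, 1).\<close>
definition lg :: "real \<Rightarrow> real" where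
  "lg x = max (log 2 x) 1"

definition Bsum :: "nat \<Rightarrow> (nat \<Rightarrow> nat) \<Rightarrow> nat \<Rightarrow> real" where
  "Bsum m d n = (\<Sum>j=1..m. real (d j) * log 2 (real n / real (d j)))"

end

theory Submission
  imports Defs "HOL-Analysis.Harmonic_Numbers"
begin

text \<open>
  Writing \<open>f x = x log\<^sub>2 x\<close>, we have \<open>B = f n - \<Sum>\<^sub>j f d\<^sub>j\<close>, so inserting into gap \<open>i\<close>
  changes \<open>B + n\<close> by \<open>1 + (f (n+1) - f n) - (f (d\<^sub>i+1) - f d\<^sub>i)\<close>. Since
  \<open>f (x+1) - f x = x (log\<^sub>2 (x+1) - log\<^sub>2 x) + log\<^sub>2 (x+1)\<close>, this equals
  \<open>1 + n (log\<^sub>2 (n+1) - log\<^sub>2 n) - d\<^sub>i (log\<^sub>2 (d\<^sub>i+1) - log\<^sub>2 d\<^sub>i) + log\<^sub>2 ((n+1)/(d\<^sub>i+1))\<close>.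
  The first product is at least 1 because \<open>(1 + 1/n)\<^sup>n \<ge> 2\<close>, the second at most
  \<open>1/ln 2 \<le> 3/2\<close>, and the last term is nonnegative and at least \<open>log\<^sub>2 (n/d\<^sub>i) - 1\<close>;
  hence the gain is at least \<open>lg (n/d\<^sub>i) / 2\<close>.
\<close>

lemma mult_log2_increment_ge_1:
  fixes n :: nat
  assumes "1 \<le> n"
  shows "real n * (log 2 (real n + 1) - log 2 (real n)) \<ge> 1"
proof -
  have n_pos: "real n > 0" using assms by simp
  have "1 + real n * (1 / real n) \<le> (1 + 1 / real n) ^ n"
    using divide_nonneg_nonneg[of 1 "real n"] by (intro Bernoulli_inequality) linarith
  hence "2 \<le> (1 + 1 / real n) ^ n"
    using n_pos by simp
  hence "ln 2 \<le> ln ((1 + 1 / real n) ^ n)"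
    using n_pos by (subst ln_le_cancel_iff) auto
  also have "\<dots> = real n * ln (1 + 1 / real n)"
    using n_pos by (simp add: ln_realpow)
  also have "ln (1 + 1 / real n) = ln (real n + 1) - ln (real n)"
    using n_pos ln_div[of "real n + 1" "real n"] by (simp add: field_simps)
  finally have "ln 2 \<le> real n * (ln (real n + 1) - ln (real n))" .
  thus ?thesis
    by (simp add: log_def field_simps flip: diff_divide_distrib)
qed

lemma mult_log2_increment_le_3_2:
  fixes x :: real
  assumes "0 < x"
  shows "x * (log 2 (x + 1) - log 2 x) \<le> 3/2"
proof -
  have "ln (x + 1) - ln x = ln (1 + 1 / x)"
    using assms ln_div[of "x + 1" x] by (simp add: field_simps)
  also have "\<dots> \<le> 1 / x"
    using assms by (intro ln_add_one_self_le_self) simp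
  finally have "x * (ln (x + 1) - ln x) \<le> 1"
    using assms by (simp add: field_simps)
  moreover have "1 / ln 2 \<le> (3/2 :: real)"
    using ln2_ge_two_thirds by (simp add: field_simps)
  ultimately show ?thesis
    by (simp add: log_def field_simps flip: diff_divide_distrib)
qed

lemma log2_succ_ratio_ge:
  fixes x y :: real
  assumes "1 \<le> y" "y \<le> x"
  shows "log 2 ((x + 1) / (y + 1)) \<ge> log 2 (x / y) - 1"
proof -
  have "x * 1 \<le> x * y"
    using assms by (intro mult_left_mono) auto
  moreover have "x * (y + 1) = x * y + x" "(x + 1) * (2 * y) = 2 * (x * y) + 2 * y"
    by (simp_all add: algebra_simps)
  ultimately have "x * (y + 1) \<le> (x + 1) * (2 * y)"
    using assms by linarith
  hence "x / (2 * y) \<le> (x + 1) / (y + 1)"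
    using assms by (simp add: field_simps)
  hence "log 2 (x / (2 * y)) \<le> log 2 ((x + 1) / (y + 1))"
    using assms by (subst log_le_cancel_iff) auto
  thus ?thesis
    using assms by (simp add: log_divide log_mult)
qed

lemma xlog_increment_gap:
  fixes n D :: nat
  assumes "1 \<le> D" "D \<le> n"
  shows "1 + ((real n + 1) * log 2 (real n + 1) - real n * log 2 (real n))
           - ((real D + 1) * log 2 (real D + 1) - real D * log 2 (real D))
         \<ge> 1/2 * lg (real n / real D)"
proof -
  have n_gain: "real n * (log 2 (real n + 1) - log 2 (real n)) \<ge> 1"
    using assms by (intro mult_log2_increment_ge_1) simp
  have D_loss: "real D * (log 2 (real D + 1) - log 2 (real D)) \<le> 3/2"
    using assms by (intro mult_log2_increment_le_3_2) simp
  have ratio_nonneg: "log 2 ((real n + 1) / (real D + 1)) \<ge> 0"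
    using assms by simp
  have ratio_ge: "log 2 ((real n + 1) / (real D + 1)) \<ge> log 2 (real n / real D) - 1"
    using assms by (intro log2_succ_ratio_ge) auto
  have "1 + ((real n + 1) * log 2 (real n + 1) - real n * log 2 (real n))
           - ((real D + 1) * log 2 (real D + 1) - real D * log 2 (real D))
        = 1 + real n * (log 2 (real n + 1) - log 2 (real n))
            - real D * (log 2 (real D + 1) - log 2 (real D))
            + log 2 ((real n + 1) / (real D + 1))"
    by (simp add: log_divide algebra_simps)
  thus ?thesis
    using n_gain D_loss ratio_nonneg ratio_ge unfolding lg_def by linarith
qed

lemma sum_fun_upd_add:
  fixes g :: "'a \<Rightarrow> 'b :: comm_monoid_add"
  assumes "finite A" "i \<in> A"
  shows "(\<Sum>j\<in>A. g ((d(i := x)) j)) + g (d i) = (\<Sum>j\<in>A. g (d j)) + g x"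
proof -
  have rest: "(\<Sum>j\<in>A - {i}. g ((d(i := x)) j)) = (\<Sum>j\<in>A - {i}. g (d j))"
    by (rule sum.cong) auto
  show ?thesis
    using sum.remove[OF assms, of "\<lambda>j. g ((d(i := x)) j)"] sum.remove[OF assms, of "\<lambda>j. g (d j)"]
    by (simp add: rest ac_simps)
qed

lemma Bsum_eq:
  assumes "\<forall>j\<in>{1..m}. 0 < e j" "0 < k"
  shows "Bsum m e k = real (\<Sum>j=1..m. e j) * log 2 (real k)
           - (\<Sum>j=1..m. real (e j) * log 2 (real (e j)))"
proof -
  have "Bsum m e k = (\<Sum>j=1..m. real (e j) * log 2 (real k) - real (e j) * log 2 (real (e j)))"
    unfolding Bsum_def using assms
    by (intro sum.cong) (auto simp: log_divide right_diff_distrib)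
  thus ?thesis
    by (simp add: sum_subtractf sum_distrib_right)
qed

lemma Bsum_gain_eq:
  assumes pos: "\<forall>j\<in>{1..m}. 0 < d j" and n_eq: "(\<Sum>j=1..m. d j) = n" and i: "i \<in> {1..m}"
  shows "(Bsum m (d(i := d i + 1)) (n + 1) + real (n + 1)) - (Bsum m d n + real n)
      = 1 + ((real n + 1) * log 2 (real n + 1) - real n * log 2 (real n))
          - ((real (d i) + 1) * log 2 (real (d i) + 1) - real (d i) * log 2 (real (d i)))"
proof -
  let ?d' = "d(i := d i + 1)"
  let ?f = "\<lambda>x. real x * log 2 (real x)"
  have pos': "\<forall>j\<in>{1..m}. 0 < ?d' j" using pos by simp
  have n_pos: "0 < n" using n_eq pos i member_le_sum[OF i, of d] by fastforce
  have n'_eq: "(\<Sum>j=1..m. ?d' j) = n + 1"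
    using sum_fun_upd_add[OF _ i, of id d "d i + 1"] n_eq by simp
  have f_sum: "(\<Sum>j=1..m. ?f (?d' j)) + ?f (d i) = (\<Sum>j=1..m. ?f (d j)) + ?f (d i + 1)"
    by (rule sum_fun_upd_add[OF _ i]) simp
  have B': "Bsum m ?d' (n + 1) = real (n + 1) * log 2 (real (n + 1)) - (\<Sum>j=1..m. ?f (?d' j))"
    using Bsum_eq[OF pos', of "n + 1"] unfolding n'_eq by (simp add: fun_upd_def)
  have B: "Bsum m d n = real n * log 2 (real n) - (\<Sum>j=1..m. ?f (d j))"
    using Bsum_eq[OF pos n_pos] unfolding n_eq by simp
  show ?thesis
    using f_sum unfolding B' B by (simp add: algebra_simps)
qed

theorem lemma5p1:
  shows "\<exists>c>0. \<forall>(m::nat) (n::nat) (d::nat \<Rightarrow> nat) (i::nat).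
           (\<forall>j\<in>{1..m}. 0 < d j) \<and> (\<Sum>j=1..m. d j) = n \<and> i \<in> {1..m} \<longrightarrow>
           (Bsum m (d(i := d i + 1)) (n + 1) + real (n + 1)) - (Bsum m d n + real n)
             \<ge> c * lg (real n / real (d i))"
proof (intro exI[of _ "1/2"] conjI allI impI)
  fix m n :: nat and d :: "nat \<Rightarrow> nat" and i
  assume "(\<forall>j\<in>{1..m}. 0 < d j) \<and> (\<Sum>j=1..m. d j) = n \<and> i \<in> {1..m}"
  hence pos: "\<forall>j\<in>{1..m}. 0 < d j" and n_eq: "(\<Sum>j=1..m. d j) = n" and i: "i \<in> {1..m}"
    by auto
  have D_pos: "1 \<le> d i" using pos i by (simp add: Suc_le_eq)
  have D_le: "d i \<le> n" using n_eq member_le_sum[OF i, of d] by simp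
  show "(Bsum m (d(i := d i + 1)) (n + 1) + real (n + 1)) - (Bsum m d n + real n)
          \<ge> 1/2 * lg (real n / real (d i))"
    unfolding Bsum_gain_eq[OF pos n_eq i] by (rule xlog_increment_gap[OF D_pos D_le])
qed simp

end
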